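(* Let $W:\mathrm{cont}^+(\mathbb{T},\xi_0)\to\mathbb{R}$ be a positive function that is positively 1-homogeneous and invariant under the adjoint action of $\mathrm{Cont}(\mathbb{T},\xi_0)=\mathrm{Diff}_0(\mathbb{T})$. Then there exists $c>0$ such that $W=cV$. In particular, $V$ is, up to rescaling, the unique bi-invariant Lorentz--Finsler metric on $(\mathrm{Cont}(\mathbb{T},\xi_0),\mathrm{cont}^+(\mathbb{T},\xi_0))$.
   Context: $\mathbb{T}=\mathbb{R}/\mathbb{Z}$ with trivial contact structure $\xi_0=\{0\}$ co-oriented by the standard orientation; $\mathrm{Diff}_0(\mathbb{T})$ is the group of orientation-preserving diffeomorphisms, acting on vector fields by push-forward $X\mapsto\phi_*X$ (the adjoint action). $\mathrm{cont}^+(\mathbb{T},\xi_0)$ is the set of vector fields $H\,\partial_x$ with $H>0$. $V(H\partial_x)=\left(\int_0^1\frac{\mathrm{d}x}{H(x)}\right)^{-1}$. A bi-invariant Lorentz--Finsler metric on the cone $\mathrm{cont}^+$ is a positive, positively 1-homogeneous, adjoint-invariant function on it that is smooth, strongly concave in non-radial directions, and extends continuously by $0$ to the boundary of the cone. *)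

theory Defs
  imports "HOL-Analysis.Analysis"
begin

text \<open>Functions on the circle T = R/Z are represented as 1-periodic functions on R.
  A vector field H d/dx on T is represented by its 1-periodic coefficient H.\<close>

definition smooth_fun :: "(real \<Rightarrow> real) \<Rightarrow> bool" where
  "smooth_fun f \<longleftrightarrow> (\<forall>n x. ((deriv ^^ n) f) differentiable (at x))"

definition periodic1 :: "(real \<Rightarrow> real) \<Rightarrow> bool" where
  "periodic1 f \<longleftrightarrow> (\<forall>x. f (x + 1) = f x)"

definition cont_plus :: "(real \<Rightarrow> real) set" where
  "cont_plus = {H. smooth_fun H \<and> periodic1 H \<and> (\<forall>x. H x > 0)}"

text \<open>Diff_0(T): orientation-preserving diffeomorphisms of T, represented by their
  lifts to R: smooth maps phi with phi(x+1) = phi(x) + 1 and phi' > 0.\<close>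
definition diff0 :: "(real \<Rightarrow> real) set" where
  "diff0 = {\<phi>. smooth_fun \<phi> \<and> (\<forall>x. \<phi> (x + 1) = \<phi> x + 1) \<and> (\<forall>x. deriv \<phi> x > 0)}"

definition push :: "(real \<Rightarrow> real) \<Rightarrow> (real \<Rightarrow> real) \<Rightarrow> (real \<Rightarrow> real)" where
  "push \<phi> H = (\<lambda>y. deriv \<phi> (inv \<phi> y) * H (inv \<phi> y))"

definition V :: "(real \<Rightarrow> real) \<Rightarrow> real" where
  "V H = 1 / integral {0..1} (\<lambda>x. 1 / H x)"

end

(* Every H in cont_plus is conjugate under Diff_0 to the constant field V(H): the lift
   phi(x) = V(H) * (integral from 0 to x of dt / H t) commutes with the unit translation
   and satisfies phi' * H = V(H), so phi_* H = V(H).  An adjoint-invariant, positively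
   homogeneous W therefore satisfies W H = W (V(H) * 1) = V(H) * W 1. *)
theory Submission
  imports Defs
begin

fun n_differentiable :: "nat \<Rightarrow> (real \<Rightarrow> real) \<Rightarrow> bool" where
  "n_differentiable 0 f \<longleftrightarrow> True"
| "n_differentiable (Suc n) f \<longleftrightarrow> (\<forall>x. f differentiable (at x)) \<and> n_differentiable n (deriv f)"

lemma n_differentiable_iff:
  "n_differentiable n f \<longleftrightarrow> (\<forall>k<n. \<forall>x. (deriv ^^ k) f differentiable (at x))"
proof (induction n arbitrary: f)
  case 0
  then show ?case by simp
next
  case (Suc n)
  have "(\<forall>k<Suc n. \<forall>x. (deriv ^^ k) f differentiable (at x)) \<longleftrightarrow>
        (\<forall>x. f differentiable (at x)) \<and> (\<forall>k<n. \<forall>x. (deriv ^^ k) (deriv f) differentiable (at x))"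
    by (auto simp: less_Suc_eq_0_disj funpow_Suc_right simp del: funpow.simps)
  then show ?case
    using Suc.IH by simp
qed

lemma smooth_fun_iff_n_differentiable: "smooth_fun f \<longleftrightarrow> (\<forall>n. n_differentiable n f)"
  unfolding smooth_fun_def n_differentiable_iff by blast

lemma n_differentiable_Suc_imp: "n_differentiable (Suc n) f \<Longrightarrow> n_differentiable n f"
  by (induction n arbitrary: f) auto

lemma n_differentiable_const: "n_differentiable n (\<lambda>_. c)"
proof (induction n arbitrary: c)
  case (Suc n)
  have "deriv (\<lambda>_. c) = (\<lambda>_. 0)"
    by (auto intro!: DERIV_imp_deriv)
  then show ?case
    using Suc.IH by simp
qed simp

lemma n_differentiable_add:
  "n_differentiable n f \<Longrightarrow> n_differentiable n g \<Longrightarrow> n_differentiable n (\<lambda>x. f x + g x)"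
proof (induction n arbitrary: f g)
  case (Suc n)
  have "deriv (\<lambda>x. f x + g x) = (\<lambda>x. deriv f x + deriv g x)"
    using Suc.prems
    by (intro ext DERIV_imp_deriv) (auto intro!: derivative_eq_intros simp: DERIV_deriv_iff_real_differentiable)
  then show ?case
    using Suc by auto
qed simp

lemma n_differentiable_mult:
  "n_differentiable n f \<Longrightarrow> n_differentiable n g \<Longrightarrow> n_differentiable n (\<lambda>x. f x * g x)"
proof (induction n arbitrary: f g)
  case (Suc n)
  have "(f has_real_derivative deriv f x) (at x)" "(g has_real_derivative deriv g x) (at x)" for x
    using Suc.prems by (simp_all add: DERIV_deriv_iff_real_differentiable)
  then have "deriv (\<lambda>x. f x * g x) = (\<lambda>x. deriv f x * g x + f x * deriv g x)"
    by (intro ext DERIV_imp_deriv) (auto intro!: derivative_eq_intros)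
  moreover have "n_differentiable n (\<lambda>x. deriv f x * g x + f x * deriv g x)"
  proof -
    have f: "n_differentiable n f" and g: "n_differentiable n g"
      using Suc.prems by (simp_all add: n_differentiable_Suc_imp)
    have f': "n_differentiable n (deriv f)" and g': "n_differentiable n (deriv g)"
      using Suc.prems by simp_all
    show ?thesis
      by (rule n_differentiable_add[OF Suc.IH[OF f' g] Suc.IH[OF f g']])
  qed
  ultimately show ?case
    using Suc.prems by auto
qed simp

lemma n_differentiable_reciprocal:
  "n_differentiable n f \<Longrightarrow> (\<And>x. f x \<noteq> 0) \<Longrightarrow> n_differentiable n (\<lambda>x. 1 / f x)"
proof (induction n arbitrary: f)
  case (Suc n)
  have "(f has_real_derivative deriv f x) (at x)" for x
    using Suc.prems by (simp add: DERIV_deriv_iff_real_differentiable)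
  \<comment> \<open>the derivative is written as a product so that the induction hypothesis and
    n_differentiable_mult apply to its factors\<close>
  then have "((\<lambda>x. 1 / f x) has_real_derivative (-1) * deriv f x * (1 / f x * (1 / f x))) (at x)" for x
    using Suc.prems(2) by (auto intro!: derivative_eq_intros simp: field_simps power2_eq_square)
  then have "deriv (\<lambda>x. 1 / f x) = (\<lambda>x. (-1) * deriv f x * (1 / f x * (1 / f x)))"
    and "\<forall>x. (\<lambda>x. 1 / f x) differentiable (at x)"
    by (auto intro!: DERIV_imp_deriv simp: real_differentiable_def)
  moreover have "n_differentiable n (\<lambda>x. (-1) * deriv f x * (1 / f x * (1 / f x)))"
  proof -
    have inv: "n_differentiable n (\<lambda>x. 1 / f x)"
      using Suc n_differentiable_Suc_imp by blast
    have d: "n_differentiable n (deriv f)"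
      using Suc.prems(1) by simp
    show ?thesis
      by (rule n_differentiable_mult[OF n_differentiable_mult[OF n_differentiable_const d]
            n_differentiable_mult[OF inv inv]])
  qed
  ultimately show ?case
    by simp
qed simp

lemma smooth_fun_const: "smooth_fun (\<lambda>_. c)"
  by (simp add: smooth_fun_iff_n_differentiable n_differentiable_const)

lemma smooth_fun_mult: "smooth_fun f \<Longrightarrow> smooth_fun g \<Longrightarrow> smooth_fun (\<lambda>x. f x * g x)"
  by (simp add: smooth_fun_iff_n_differentiable n_differentiable_mult)

lemma smooth_fun_reciprocal: "smooth_fun f \<Longrightarrow> (\<And>x. f x \<noteq> 0) \<Longrightarrow> smooth_fun (\<lambda>x. 1 / f x)"
  by (simp add: smooth_fun_iff_n_differentiable n_differentiable_reciprocal)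

lemma smooth_fun_differentiable: "smooth_fun f \<Longrightarrow> f differentiable (at x)"
  using smooth_fun_iff_n_differentiable[of f] n_differentiable.simps(2)[of 0 f] by blast

lemma smooth_fun_if_derivative_smooth:
  assumes f': "\<And>x. (f has_real_derivative f' x) (at x)" and "smooth_fun f'"
  shows "smooth_fun f"
  unfolding smooth_fun_iff_n_differentiable
proof
  fix n
  have "deriv f = f'"
    using f' by (intro ext DERIV_imp_deriv)
  moreover have "\<forall>x. f differentiable (at x)"
    using f' real_differentiable_def by blast
  ultimately have "n_differentiable (Suc n) f"
    using \<open>smooth_fun f'\<close> by (simp add: smooth_fun_iff_n_differentiable)
  then show "n_differentiable n f"
    by (rule n_differentiable_Suc_imp)
qed

lemma antiderivative_periodic_increment:
  fixes F f :: "real \<Rightarrow> real"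
  assumes F': "\<And>x. (F has_real_derivative f x) (at x)" and f_periodic: "\<And>x. f (x + p) = f x"
  shows "F (x + p) = F x + (F p - F 0)"
proof -
  have "((\<lambda>x. F (x + p) - F x) has_real_derivative 0) (at x)" for x
    using DERIV_diff[OF F'[of "x + p", unfolded DERIV_shift] F'[of x]] f_periodic by simp
  then have "F (x + p) - F x = F (0 + p) - F 0"
    using DERIV_isconst_all[of "\<lambda>x. F (x + p) - F x"] by blast
  then show ?thesis
    by simp
qed

lemma degree_one_lift_surj:
  fixes \<phi> :: "real \<Rightarrow> real"
  assumes cont: "continuous_on UNIV \<phi>" and lift: "\<And>x. \<phi> (x + 1) = \<phi> x + 1"
  shows "surj \<phi>"
proof -
  have shift: "\<phi> (x + real n) = \<phi> x + real n" for x n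
  proof (induction n)
    case (Suc n)
    have "\<phi> (x + real (Suc n)) = \<phi> (x + real n) + 1"
      using lift[of "x + real n"] by (simp add: ac_simps)
    then show ?case
      using Suc.IH by simp
  qed simp
  have "\<exists>x. \<phi> x = y" for y
  proof -
    define n where "n = nat \<lceil>\<bar>y - \<phi> 0\<bar>\<rceil>"
    have "\<phi> (- real n) = \<phi> 0 - real n" "\<phi> (real n) = \<phi> 0 + real n"
      using shift[of "- real n" n] shift[of 0 n] by simp_all
    moreover have "\<phi> 0 - real n \<le> y" "y \<le> \<phi> 0 + real n"
      unfolding n_def by linarith+
    ultimately show ?thesis
      using IVT'[of \<phi> "- real n" y "real n"] continuous_on_subset[OF cont] by auto
  qed
  then show ?thesis
    by (metis surj_def)
qed

lemma push_apply: "inj \<phi> \<Longrightarrow> push \<phi> H (\<phi> x) = deriv \<phi> x * H x"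
  by (simp add: push_def)

lemma cont_plus_reciprocal_smooth: "H \<in> cont_plus \<Longrightarrow> smooth_fun (\<lambda>x. 1 / H x)"
  unfolding cont_plus_def by (auto intro!: smooth_fun_reciprocal simp: less_imp_neq[symmetric])

lemma cont_plus_reciprocal_antiderivative:
  assumes "H \<in> cont_plus"
  obtains F where "\<And>x. (F has_real_derivative 1 / H x) (at x)" "strict_mono F"
    "\<And>x. F (x + 1) = F x + 1 / V H"
proof -
  define g where "g x = 1 / H x" for x
  have H_periodic: "\<And>x. H (x + 1) = H x" and H_pos: "\<And>x. H x > 0"
    using assms by (auto simp: cont_plus_def periodic1_def)
  have g_pos: "g x > 0" and g_periodic: "g (x + 1) = g x" for x
    using H_pos H_periodic by (simp_all add: g_def)
  have "smooth_fun g"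
    unfolding g_def using assms by (rule cont_plus_reciprocal_smooth)
  then have "isCont g x" for x
    by (blast intro: smooth_fun_differentiable differentiable_imp_continuous_within)
  then obtain F where "\<And>x. (F has_vector_derivative g x) (at x)"
    using einterval_antiderivative[of "-\<infinity>" "\<infinity>" g] by auto
  then have F': "(F has_real_derivative g x) (at x)" for x
    by (simp add: has_real_derivative_iff_has_vector_derivative)
  have "strict_mono F"
  proof (rule strict_monoI)
    fix a b :: real
    assume "a < b"
    then show "F a < F b"
      by (rule DERIV_pos_imp_increasing) (use F' g_pos in blast)
  qed
  have "(g has_integral (F 1 - F 0)) {0..1}"
    using F' by (intro fundamental_theorem_of_calculus)
      (auto simp: has_real_derivative_iff_has_vector_derivative[symmetric] intro: DERIV_subset)
  then have "1 / V H = F 1 - F 0"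
    by (simp add: V_def g_def[symmetric] integral_unique)
  then have "F (x + 1) = F x + 1 / V H" for x
    using antiderivative_periodic_increment[OF F' g_periodic] by simp
  with F' \<open>strict_mono F\<close> show thesis
    unfolding g_def by (rule that)
qed

lemma V_pos: "H \<in> cont_plus \<Longrightarrow> V H > 0"
proof -
  assume "H \<in> cont_plus"
  then obtain F :: "real \<Rightarrow> real" where "strict_mono F" and "F (0 + 1) = F 0 + 1 / V H"
    using cont_plus_reciprocal_antiderivative by blast
  then have "F 0 < F 0 + 1 / V H"
    using strict_monoD[of F 0 1] by simp
  then show "V H > 0"
    by simp
qed

lemma cont_plus_conjugate_to_V:
  assumes H: "H \<in> cont_plus"
  obtains \<phi> where "\<phi> \<in> diff0" "push \<phi> H = (\<lambda>_. V H)"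
proof -
  obtain F where F': "\<And>x. (F has_real_derivative 1 / H x) (at x)" and "strict_mono F"
    and F_increment: "\<And>x. F (x + 1) = F x + 1 / V H"
    using cont_plus_reciprocal_antiderivative[OF H] by blast
  have H_pos: "\<And>x. H x > 0"
    using H by (auto simp: cont_plus_def)
  have "V H > 0"
    using H by (rule V_pos)
  define \<phi> where "\<phi> x = V H * (F x - F 0)" for x
  have \<phi>': "(\<phi> has_real_derivative V H * (1 / H x)) (at x)" for x
    unfolding \<phi>_def using F' by (auto intro!: derivative_eq_intros)
  then have deriv_\<phi>: "deriv \<phi> x = V H * (1 / H x)" for x
    by (rule DERIV_imp_deriv)
  have "smooth_fun (\<lambda>x. V H * (1 / H x))"
    by (rule smooth_fun_mult[OF smooth_fun_const cont_plus_reciprocal_smooth[OF H]])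
  then have "smooth_fun \<phi>"
    by (rule smooth_fun_if_derivative_smooth[OF \<phi>'])
  moreover have \<phi>_lift: "\<phi> (x + 1) = \<phi> x + 1" for x
    unfolding \<phi>_def F_increment using \<open>V H > 0\<close> by (simp add: field_simps)
  ultimately have "\<phi> \<in> diff0"
    using \<open>V H > 0\<close> H_pos by (simp add: diff0_def deriv_\<phi>)
  moreover have "push \<phi> H = (\<lambda>_. V H)"
  proof
    fix y
    have "inj \<phi>"
      using \<open>strict_mono F\<close> \<open>V H > 0\<close>
      by (intro strict_mono_imp_inj_on strict_monoI) (simp add: \<phi>_def strict_mono_less)
    moreover have "continuous_on UNIV \<phi>"
      using \<phi>' by (blast intro: continuous_at_imp_continuous_on DERIV_continuous)
    then have "surj \<phi>"
      using \<phi>_lift by (rule degree_one_lift_surj)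
    then obtain x where "y = \<phi> x"
      by blast
    ultimately show "push \<phi> H y = V H"
      using H_pos[of x] by (simp add: push_apply deriv_\<phi>)
  qed
  ultimately show thesis
    by (rule that)
qed

theorem proposition3p1:
  fixes W :: "(real \<Rightarrow> real) \<Rightarrow> real"
  assumes pos: "\<And>H. H \<in> cont_plus \<Longrightarrow> W H > 0"
    and hom: "\<And>H c. H \<in> cont_plus \<Longrightarrow> c > 0 \<Longrightarrow> W (\<lambda>x. c * H x) = c * W H"
    and inv: "\<And>H \<phi>. H \<in> cont_plus \<Longrightarrow> \<phi> \<in> diff0 \<Longrightarrow> W (push \<phi> H) = W H"
  shows "\<exists>c>0. \<forall>H\<in>cont_plus. W H = c * V H"
proof (intro exI conjI ballI)
  have one: "(\<lambda>_. 1) \<in> cont_plus"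
    by (simp add: cont_plus_def periodic1_def smooth_fun_const)
  then show "W (\<lambda>_. 1) > 0"
    by (rule pos)
  fix H
  assume H: "H \<in> cont_plus"
  then obtain \<phi> where \<phi>: "\<phi> \<in> diff0" and push_H: "push \<phi> H = (\<lambda>_. V H)"
    by (rule cont_plus_conjugate_to_V)
  have "W H = W (\<lambda>_. V H * 1)"
    using inv[OF H \<phi>] push_H by simp
  also have "\<dots> = V H * W (\<lambda>_. 1)"
    using hom[OF one V_pos[OF H]] .
  finally show "W H = W (\<lambda>_. 1) * V H"
    by simp
qed

end
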